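(* Consider the Gaussian partial interference multiple access channel (PIMAC) with real channel coefficients $h_{12},h_{22},h_{31}$ and transmit power constraints $P_1,P_2,P_3>0$. Define the SD-TIN sum-rate $$R_\Sigma^{SD\text{-}TIN}=\frac{1}{2}\log\left(1+\frac{P_1+P_2}{1+h_{31}^2P_3}\right)+\frac{1}{2}\log\left(1+\frac{P_3}{1+h_{12}^2P_1+h_{22}^2P_2}\right)$$ and the TDMA-TIN sum-rate $R_\Sigma^{TDMA\text{-}TIN}=\max_{\alpha\in[0,1]}\big(A(\alpha)+B(\alpha)\big)$, where $$A(\alpha)=\frac{\alpha}{2}\log\left(1+\frac{P_1/\alpha}{1+h_{31}^2P_3}\right)+\frac{1-\alpha}{2}\log\left(1+\frac{P_2/(1-\alpha)}{1+h_{31}^2P_3}\right),$$ $$B(\alpha)=\frac{\alpha}{2}\log\left(1+\frac{P_3}{1+h_{12}^2P_1/\alpha}\right)+\frac{1-\alpha}{2}\log\left(1+\frac{P_3}{1+h_{22}^2P_2/(1-\alpha)}\right)$$ (with the terms at $\alpha=0$ and $\alpha=1$ understood as their limits). Then $R_\Sigma^{TDMA\text{-}TIN}\geq R_\Sigma^{SD\text{-}TIN}$; moreover, already the choice $\alpha=\alpha^*=\frac{P_1}{P_1+P_2}$ gives $A(\alpha^* )+B(\alpha^* )\ge R_\Sigma^{SD\text{-}TIN}$, and if $h_{12}^2\neq h_{22}^2$ then $A(\alpha^* )+B(\alpha^* )> R_\Sigma^{SD\text{-}TIN}$, so in particular $R_\Sigma^{TDMA\text{-}TIN}> R_\Sig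ma^{SD\text{-}TIN}$.
   Context: The PIMAC has received signals $Y_1=X_1+X_2+h_{31}X_3+Z_1$ and $Y_2=h_{12}X_1+h_{22}X_2+X_3+Z_2$, where $Z_1,Z_2\sim\mathcal{N}(0,1)$ are i.i.d. noise, receiver 1 wants the messages of transmitters 1 and 2, receiver 2 wants the message of transmitter 3, and transmitter $i$ has average power constraint $P_i$. $R_\Sigma^{SD\text{-}TIN}$ is the sum-rate achieved with Gaussian codes at full power, successive decoding at receiver 1 treating $X_3$ as noise, and receiver 2 treating $X_1,X_2$ as noise; $R_\Sigma^{TDMA\text{-}TIN}$ is the sum-rate when users 1 and 2 time-share (fractions $\alpha$, $1-\alpha$, with powers $P_1/\alpha$, $P_2/(1-\alpha)$) and all receivers treat interference as noise. Logarithms are base 2. *)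

theory Defs
  imports Complex_Main
begin

text \<open>Time-sharing TIN term for a user with fraction a and (average) power P, facing
  noise-plus-interference N:  (a/2) log2 (1 + (P/a)/N); at a = 0 it is its limit, 0.\<close>
definition ts_term :: "real \<Rightarrow> real \<Rightarrow> real \<Rightarrow> real" where
  "ts_term a P N = (if a = 0 then 0 else a / 2 * log 2 (1 + (P / a) / N))"

definition ts_int_term :: "real \<Rightarrow> real \<Rightarrow> real \<Rightarrow> real \<Rightarrow> real" where
  "ts_int_term a P3 g P = (if a = 0 then 0 else a / 2 * log 2 (1 + P3 / (1 + g * P / a)))"

definition R_SD_TIN :: "real \<Rightarrow> real \<Rightarrow> real \<Rightarrow> real \<Rightarrow> real \<Rightarrow> real \<Rightarrow> real" where
  "R_SD_TIN h12 h22 h31 P1 P2 P3 =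
     1/2 * log 2 (1 + (P1 + P2) / (1 + h31^2 * P3))
   + 1/2 * log 2 (1 + P3 / (1 + h12^2 * P1 + h22^2 * P2))"

definition A_TDMA :: "real \<Rightarrow> real \<Rightarrow> real \<Rightarrow> real \<Rightarrow> real \<Rightarrow> real" where
  "A_TDMA h31 P1 P2 P3 \<alpha> =
     ts_term \<alpha> P1 (1 + h31^2 * P3) + ts_term (1 - \<alpha>) P2 (1 + h31^2 * P3)"

definition B_TDMA :: "real \<Rightarrow> real \<Rightarrow> real \<Rightarrow> real \<Rightarrow> real \<Rightarrow> real \<Rightarrow> real" where
  "B_TDMA h12 h22 P1 P2 P3 \<alpha> =
     ts_int_term \<alpha> P3 (h12^2) P1 + ts_int_term (1 - \<alpha>) P3 (h22^2) P2"

definition R_TDMA_TIN :: "real \<Rightarrow> real \<Rightarrow> real \<Rightarrow> real \<Rightarrow> real \<Rightarrow> real \<Rightarrow> real" where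
  "R_TDMA_TIN h12 h22 h31 P1 P2 P3 =
     (SUP \<alpha>\<in>{0..1}. A_TDMA h31 P1 P2 P3 \<alpha> + B_TDMA h12 h22 P1 P2 P3 \<alpha>)"

end

theory Submission
  imports Defs "HOL-Analysis.Convex"
begin

text \<open>With \<open>\<alpha>* = P1 / (P1 + P2)\<close> both time-sharing users transmit at the same instantaneous
  power \<open>P1 + P2\<close>, so receiver 1 gets exactly the SD-TIN rate. At receiver 2 the interference
  power is \<open>h12\<^sup>2 (P1 + P2)\<close> for a fraction \<open>\<alpha>*\<close> of the time and \<open>h22\<^sup>2 (P1 + P2)\<close>
  otherwise; its average is the SD-TIN interference \<open>h12\<^sup>2 P1 + h22\<^sup>2 P2\<close>. Since
  \<open>t \<mapsto> log (1 + P3 / (1 + t))\<close> is strictly convex, Jensen's inequality gives the claim,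
  strictly when \<open>h12\<^sup>2 \<noteq> h22\<^sup>2\<close>.\<close>

lemma strict_mono_deriv_imp_above_tangent:
  fixes f f' :: "real \<Rightarrow> real"
  assumes "convex C"
    and deriv: "\<And>t. t \<in> C \<Longrightarrow> (f has_real_derivative f' t) (at t)"
    and mono: "strict_mono_on C f'"
    and "x \<in> C" "m \<in> C" "x \<noteq> m"
  shows "f m + f' m * (x - m) < f x"
proof -
  have mvt: "\<exists>z\<in>C. f b - f a = (b - a) * f' z \<and> a < z \<and> z < b"
    if "a \<in> C" "b \<in> C" "a < b" for a b
  proof -
    have "{a..b} \<subseteq> C" using atMostAtLeast_subset_convex \<open>convex C\<close> that by blast
    with MVT2[OF \<open>a < b\<close>, of f f'] deriv show ?thesis by force
  qed
  show ?thesis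
  proof (cases "m < x")
    case True
    then obtain z where "z \<in> C" "f x - f m = (x - m) * f' z" "m < z"
      using mvt \<open>x \<in> C\<close> \<open>m \<in> C\<close> by blast
    moreover have "f' m < f' z" using mono \<open>m \<in> C\<close> \<open>z \<in> C\<close> \<open>m < z\<close> by (simp add: strict_mono_onD)
    ultimately have "(x - m) * f' m < f x - f m" using True by (simp add: mult_strict_left_mono)
    then show ?thesis by (simp add: algebra_simps)
  next
    case False
    then have "x < m" using \<open>x \<noteq> m\<close> by simp
    then obtain z where "z \<in> C" "f m - f x = (m - x) * f' z" "z < m"
      using mvt \<open>x \<in> C\<close> \<open>m \<in> C\<close> by blast
    moreover have "f' z < f' m" using mono \<open>m \<in> C\<close> \<open>z \<in> C\<close> \<open>z < m\<close> by (simp add: strict_mono_onD)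
    ultimately have "f m - f x < (m - x) * f' m" using \<open>x < m\<close> by (simp add: mult_strict_left_mono)
    then show ?thesis by (simp add: algebra_simps)
  qed
qed

lemma strict_mono_deriv_imp_convex_comb_less:
  fixes f f' :: "real \<Rightarrow> real"
  assumes "convex C"
    and deriv: "\<And>t. t \<in> C \<Longrightarrow> (f has_real_derivative f' t) (at t)"
    and mono: "strict_mono_on C f'"
    and "x \<in> C" "y \<in> C" "x \<noteq> y" "0 < a" "a < 1"
  shows "f (a * x + (1 - a) * y) < a * f x + (1 - a) * f y"
proof -
  define m where "m = a * x + (1 - a) * y"
  have "m \<in> C"
    using convexD[OF \<open>convex C\<close> \<open>x \<in> C\<close> \<open>y \<in> C\<close>, of a "1 - a"] \<open>0 < a\<close> \<open>a < 1\<close>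
    by (simp add: m_def)
  have "x - m = (1 - a) * (x - y)" "y - m = a * (y - x)" by (simp_all add: m_def algebra_simps)
  then have "x \<noteq> m" "y \<noteq> m" using \<open>x \<noteq> y\<close> \<open>0 < a\<close> \<open>a < 1\<close> by auto
  have "f m + f' m * (x - m) < f x" "f m + f' m * (y - m) < f y"
    using strict_mono_deriv_imp_above_tangent[OF \<open>convex C\<close> deriv mono] \<open>m \<in> C\<close> \<open>x \<in> C\<close> \<open>y \<in> C\<close>
      \<open>x \<noteq> m\<close> \<open>y \<noteq> m\<close> by blast+
  then have "a * (f m + f' m * (x - m)) + (1 - a) * (f m + f' m * (y - m)) < a * f x + (1 - a) * f y"
    using \<open>0 < a\<close> \<open>a < 1\<close> by (intro add_strict_mono mult_strict_left_mono) auto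
  moreover have "a * (f m + f' m * (x - m)) + (1 - a) * (f m + f' m * (y - m))
      = f m + f' m * (a * (x - m) + (1 - a) * (y - m))"
    by (simp add: algebra_simps)
  moreover have "a * (x - m) + (1 - a) * (y - m) = 0" by (simp add: m_def algebra_simps)
  ultimately show ?thesis by (simp add: m_def)
qed

definition tin_rate :: "real \<Rightarrow> real \<Rightarrow> real" where
  "tin_rate c t = log 2 (1 + c / (1 + t))"

lemma tin_rate_has_derivative:
  assumes "0 \<le> c" "-1 < t"
  shows "(tin_rate c has_real_derivative - c / ((1 + t) * (1 + c + t) * ln 2)) (at t)"
proof -
  have "1 + t > 0" "1 + c + t > 0" using assms by auto
  have frac: "1 + c / (1 + t) = (1 + c + t) / (1 + t)" using \<open>1 + t > 0\<close> by (simp add: field_simps)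
  have denom: "ln 2 * ((1 + c + t) / (1 + t)) * (1 + t)^2 = (1 + t) * (1 + c + t) * ln 2"
    using \<open>1 + t > 0\<close> by (simp add: field_simps power2_eq_square)
  have "((\<lambda>t. log 2 (1 + c / (1 + t))) has_real_derivative
      - c / (ln 2 * ((1 + c + t) / (1 + t)) * (1 + t)^2)) (at t)"
    using assms frac \<open>1 + c + t > 0\<close> by (auto intro!: derivative_eq_intros simp: power2_eq_square divide_inverse)
  then show ?thesis unfolding tin_rate_def denom .
qed

lemma tin_rate_deriv_strict_mono:
  fixes c :: real
  assumes "0 < c"
  shows "strict_mono_on {-1<..} (\<lambda>t. - c / ((1 + t) * (1 + c + t) * ln 2))"
proof (rule strict_mono_onI)
  fix s t :: real
  assume "s \<in> {-1<..}" "t \<in> {-1<..}" "s < t"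
  then have less: "(1 + s) * (1 + c + s) * ln 2 < (1 + t) * (1 + c + t) * ln 2"
    using assms by (intro mult_strict_right_mono mult_strict_mono) auto
  have pos: "0 < (1 + s) * (1 + c + s) * ln 2" using \<open>s \<in> {-1<..}\<close> assms by simp
  have "c / ((1 + t) * (1 + c + t) * ln 2) < c / ((1 + s) * (1 + c + s) * ln 2)"
    using divide_strict_left_mono[OF less assms mult_pos_pos[OF order.strict_trans[OF pos less] pos]] .
  then show "- c / ((1 + s) * (1 + c + s) * ln 2) < - c / ((1 + t) * (1 + c + t) * ln 2)"
    by simp
qed

lemma tin_rate_convex_comb_less:
  assumes "0 < c" "-1 < x" "-1 < y" "x \<noteq> y" "0 < a" "a < 1"
  shows "tin_rate c (a * x + (1 - a) * y) < a * tin_rate c x + (1 - a) * tin_rate c y"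
  using assms
  by (intro strict_mono_deriv_imp_convex_comb_less[OF _ tin_rate_has_derivative tin_rate_deriv_strict_mono])
    auto

lemma tin_rate_convex_comb_le:
  assumes "0 < c" "-1 < x" "-1 < y" "0 < a" "a < 1"
  shows "tin_rate c (a * x + (1 - a) * y) \<le> a * tin_rate c x + (1 - a) * tin_rate c y"
proof (cases "x = y")
  case True
  then show ?thesis by (simp add: algebra_simps)
next
  case False
  then show ?thesis using tin_rate_convex_comb_less assms by (simp add: less_imp_le)
qed

lemma ts_term_le:
  assumes "0 \<le> a" "0 \<le> P" "0 < N"
  shows "ts_term a P N \<le> P / (2 * N * ln 2)"
proof (cases "a = 0")
  case True
  then show ?thesis using assms by (simp add: ts_term_def)
next
  case False
  then have "0 < a" using assms by simp
  have "ln (1 + P / a / N) \<le> P / a / N"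
    using \<open>0 < a\<close> assms by (intro ln_add_one_self_le_self) simp
  then have "a / 2 * ln (1 + P / a / N) \<le> a / 2 * (P / a / N)"
    using \<open>0 < a\<close> by (intro mult_left_mono) auto
  also have "\<dots> = P / (2 * N)" using \<open>0 < a\<close> by simp
  finally have "a / 2 * ln (1 + P / a / N) / ln 2 \<le> P / (2 * N) / ln 2"
    by (rule divide_right_mono) simp
  then show ?thesis using False by (simp add: ts_term_def log_def)
qed

lemma ts_int_term_le:
  assumes "0 \<le> a" "0 \<le> P3" "0 \<le> g * P"
  shows "ts_int_term a P3 g P \<le> a * P3 / (2 * ln 2)"
proof (cases "a = 0")
  case True
  then show ?thesis by (simp add: ts_int_term_def)
next
  case False
  then have "0 < a" using assms by simp
  then have one: "1 \<le> 1 + g * P / a" using assms by simp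
  have "P3 / (1 + g * P / a) \<le> P3 / 1"
    using one by (rule divide_left_mono[OF _ assms(2)]) (simp add: order.strict_trans2[OF zero_less_one one])
  moreover have "ln (1 + P3 / (1 + g * P / a)) \<le> P3 / (1 + g * P / a)"
    using one assms by (intro ln_add_one_self_le_self) simp
  ultimately have "a / 2 * ln (1 + P3 / (1 + g * P / a)) \<le> a / 2 * P3"
    using \<open>0 < a\<close> by (intro mult_left_mono) auto
  then have "a / 2 * ln (1 + P3 / (1 + g * P / a)) / ln 2 \<le> a / 2 * P3 / ln 2"
    by (rule divide_right_mono) simp
  then show ?thesis using False by (simp add: ts_int_term_def log_def)
qed

lemma bdd_above_TDMA_TIN:
  assumes "0 \<le> P1" "0 \<le> P2" "0 \<le> P3"
  shows "bdd_above ((\<lambda>\<alpha>. A_TDMA h31 P1 P2 P3 \<alpha> + B_TDMA h12 h22 P1 P2 P3 \<alpha>) ` {0..1})"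
proof (rule bdd_aboveI2)
  fix \<alpha> :: real
  assume "\<alpha> \<in> {0..1}"
  define N where "N = 1 + h31^2 * P3"
  have "0 < N" using assms by (simp add: N_def add_pos_nonneg)
  have "A_TDMA h31 P1 P2 P3 \<alpha> \<le> P1 / (2 * N * ln 2) + P2 / (2 * N * ln 2)"
    unfolding A_TDMA_def N_def[symmetric]
    using \<open>\<alpha> \<in> {0..1}\<close> \<open>0 < N\<close> assms by (intro add_mono ts_term_le) auto
  moreover have "B_TDMA h12 h22 P1 P2 P3 \<alpha> \<le> \<alpha> * P3 / (2 * ln 2) + (1 - \<alpha>) * P3 / (2 * ln 2)"
    unfolding B_TDMA_def
    using \<open>\<alpha> \<in> {0..1}\<close> assms by (intro add_mono ts_int_term_le) auto
  ultimately show "A_TDMA h31 P1 P2 P3 \<alpha> + B_TDMA h12 h22 P1 P2 P3 \<alpha>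
      \<le> (P1 + P2) / (2 * N * ln 2) + P3 / (2 * ln 2)"
    by (simp add: add_divide_distrib diff_divide_distrib left_diff_distrib)
qed

lemma power_ratio_split:
  fixes P1 P2 :: real
  assumes "0 < P1" "0 < P2"
  defines "a \<equiv> P1 / (P1 + P2)"
  shows "0 < a" "a < 1" "P1 / a = P1 + P2" "P2 / (1 - a) = P1 + P2"
  using assms by (simp_all add: a_def field_simps)

lemma A_TDMA_power_ratio:
  assumes "0 < P1" "0 < P2"
  defines "a \<equiv> P1 / (P1 + P2)"
  shows "A_TDMA h31 P1 P2 P3 a = 1/2 * log 2 (1 + (P1 + P2) / (1 + h31^2 * P3))"
proof -
  have "0 < a" "a < 1" "P1 / a = P1 + P2" "P2 / (1 - a) = P1 + P2"
    unfolding a_def by (rule power_ratio_split[OF assms(1,2)])+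
  then have "A_TDMA h31 P1 P2 P3 a = a / 2 * log 2 (1 + (P1 + P2) / (1 + h31^2 * P3))
      + (1 - a) / 2 * log 2 (1 + (P1 + P2) / (1 + h31^2 * P3))"
    by (simp add: A_TDMA_def ts_term_def)
  then show ?thesis by (simp add: field_simps)
qed

lemma B_TDMA_power_ratio:
  assumes "0 < P1" "0 < P2"
  defines "a \<equiv> P1 / (P1 + P2)"
  shows "B_TDMA h12 h22 P1 P2 P3 a
    = 1/2 * (a * tin_rate P3 (h12^2 * (P1 + P2)) + (1 - a) * tin_rate P3 (h22^2 * (P1 + P2)))"
proof -
  have a: "0 < a" "a < 1" "P1 / a = P1 + P2" "P2 / (1 - a) = P1 + P2"
    unfolding a_def by (rule power_ratio_split[OF assms(1,2)])+
  then have "h12^2 * P1 / a = h12^2 * (P1 + P2)" "h22^2 * P2 / (1 - a) = h22^2 * (P1 + P2)"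
    by (metis times_divide_eq_right)+
  with a have "B_TDMA h12 h22 P1 P2 P3 a
      = a / 2 * tin_rate P3 (h12^2 * (P1 + P2)) + (1 - a) / 2 * tin_rate P3 (h22^2 * (P1 + P2))"
    by (simp add: B_TDMA_def ts_int_term_def tin_rate_def)
  then show ?thesis by (simp add: field_simps)
qed

lemma R_SD_TIN_power_ratio:
  assumes "P1 + P2 \<noteq> 0"
  defines "a \<equiv> P1 / (P1 + P2)"
  shows "R_SD_TIN h12 h22 h31 P1 P2 P3 = 1/2 * log 2 (1 + (P1 + P2) / (1 + h31^2 * P3))
    + 1/2 * tin_rate P3 (a * (h12^2 * (P1 + P2)) + (1 - a) * (h22^2 * (P1 + P2)))"
proof -
  have "a * (P1 + P2) = P1" "(1 - a) * (P1 + P2) = P2" using assms by (simp_all add: field_simps)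
  moreover have "a * (h12^2 * (P1 + P2)) + (1 - a) * (h22^2 * (P1 + P2))
      = h12^2 * (a * (P1 + P2)) + h22^2 * ((1 - a) * (P1 + P2))"
    by (simp add: algebra_simps)
  ultimately have "a * (h12^2 * (P1 + P2)) + (1 - a) * (h22^2 * (P1 + P2)) = h12^2 * P1 + h22^2 * P2"
    by simp
  then show ?thesis by (simp add: R_SD_TIN_def tin_rate_def add.assoc)
qed

lemma TDMA_TIN_power_ratio_gain:
  fixes h12 h22 h31 P1 P2 P3 :: real
  assumes "0 < P1" "0 < P2"
  defines "a \<equiv> P1 / (P1 + P2)" and "x1 \<equiv> h12^2 * (P1 + P2)" and "x2 \<equiv> h22^2 * (P1 + P2)"
  shows "A_TDMA h31 P1 P2 P3 a + B_TDMA h12 h22 P1 P2 P3 a - R_SD_TIN h12 h22 h31 P1 P2 P3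
    = 1/2 * (a * tin_rate P3 x1 + (1 - a) * tin_rate P3 x2 - tin_rate P3 (a * x1 + (1 - a) * x2))"
proof -
  have "P1 + P2 \<noteq> 0" using assms by simp
  then show ?thesis
    unfolding a_def x1_def x2_def A_TDMA_power_ratio[OF assms(1,2)] B_TDMA_power_ratio[OF assms(1,2)]
      R_SD_TIN_power_ratio[OF \<open>P1 + P2 \<noteq> 0\<close>]
    by (simp add: right_diff_distrib)
qed

theorem mainTheorem1:
  fixes h12 h22 h31 P1 P2 P3 :: real
  assumes "P1 > 0" and "P2 > 0" and "P3 > 0"
  defines "\<alpha>s \<equiv> P1 / (P1 + P2)"
  shows "R_TDMA_TIN h12 h22 h31 P1 P2 P3 \<ge> R_SD_TIN h12 h22 h31 P1 P2 P3
       \<and> A_TDMA h31 P1 P2 P3 \<alpha>s + B_TDMA h12 h22 P1 P2 P3 \<alpha>s \<ge> R_SD_TIN h12 h22 h31 P1 P2 P3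
       \<and> (h12^2 \<noteq> h22^2 \<longrightarrow>
            A_TDMA h31 P1 P2 P3 \<alpha>s + B_TDMA h12 h22 P1 P2 P3 \<alpha>s > R_SD_TIN h12 h22 h31 P1 P2 P3
          \<and> R_TDMA_TIN h12 h22 h31 P1 P2 P3 > R_SD_TIN h12 h22 h31 P1 P2 P3)"
proof -
  define x1 x2 where "x1 = h12^2 * (P1 + P2)" and "x2 = h22^2 * (P1 + P2)"
  have "0 < \<alpha>s" "\<alpha>s < 1" unfolding \<alpha>s_def by (rule power_ratio_split[OF assms(1,2)])+
  have "0 \<le> x1" "0 \<le> x2" using assms by (simp_all add: x1_def x2_def)
  then have "-1 < x1" "-1 < x2" by simp_all
  have gain: "A_TDMA h31 P1 P2 P3 \<alpha>s + B_TDMA h12 h22 P1 P2 P3 \<alpha>s - R_SD_TIN h12 h22 h31 P1 P2 P3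
    = 1/2 * (\<alpha>s * tin_rate P3 x1 + (1 - \<alpha>s) * tin_rate P3 x2 - tin_rate P3 (\<alpha>s * x1 + (1 - \<alpha>s) * x2))"
    unfolding \<alpha>s_def x1_def x2_def by (rule TDMA_TIN_power_ratio_gain[OF assms(1,2)])
  have le: "R_SD_TIN h12 h22 h31 P1 P2 P3 \<le> A_TDMA h31 P1 P2 P3 \<alpha>s + B_TDMA h12 h22 P1 P2 P3 \<alpha>s"
    using tin_rate_convex_comb_le[OF assms(3) \<open>-1 < x1\<close> \<open>-1 < x2\<close> \<open>0 < \<alpha>s\<close> \<open>\<alpha>s < 1\<close>] gain
    by simp
  have less: "R_SD_TIN h12 h22 h31 P1 P2 P3 < A_TDMA h31 P1 P2 P3 \<alpha>s + B_TDMA h12 h22 P1 P2 P3 \<alpha>s"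
    if "h12^2 \<noteq> h22^2"
  proof -
    have "x1 \<noteq> x2" using that assms by (simp add: x1_def x2_def)
    from tin_rate_convex_comb_less[OF assms(3) \<open>-1 < x1\<close> \<open>-1 < x2\<close> this \<open>0 < \<alpha>s\<close> \<open>\<alpha>s < 1\<close>]
    show ?thesis using gain by simp
  qed
  have "A_TDMA h31 P1 P2 P3 \<alpha>s + B_TDMA h12 h22 P1 P2 P3 \<alpha>s \<le> R_TDMA_TIN h12 h22 h31 P1 P2 P3"
    unfolding R_TDMA_TIN_def using \<open>0 < \<alpha>s\<close> \<open>\<alpha>s < 1\<close> assms
    by (intro cSUP_upper bdd_above_TDMA_TIN) auto
  with le less show ?thesis by auto
qed

end
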